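(* For every $\varepsilon>0$ there exists $N=N(\varepsilon,\Omega)>0$ such that for every $n>N$, every probability measure $\mu\in\mathcal P(\Omega^n)$ and every partition $\vec V_0$ of $[n]$ of size $\#\vec V_0\le 1/\varepsilon$ the following holds: there exist a partition $\vec V$ of $[n]$ refining $\vec V_0$ and a partition $\vec S$ of $\Omega^n$ such that $\#\vec V+\#\vec S\le N$ and $\mu$ is $\varepsilon$-homogeneous with respect to $(\vec V,\vec S)$.
   Context: $\Omega$ is a fixed finite nonempty set and $\mathcal P(\mathcal X)$ denotes the set of probability measures on a finite set $\mathcal X$; $\|\cdot\|_{TV}$ is the total variation norm. For $\sigma\in\Omega^n$, nonempty $S\subset[n]$ and $\omega\in\Omega$ let $\sigma[\omega|S]=|\sigma^{-1}(\omega)\cap S|/|S|$, so $\sigma[\cdot|S]\in\mathcal P(\Omega)$. For $\mu\in\mathcal P(\Omega^n)$ and $X:\Omega^n\to\mathbb R$, $\langle X(\boldsymbol\sigma)\rangle_\mu=\sum_\sigma\mu(\sigma)X(\sigma)$; for $A\subset\Omega^n$ with $\mu(A)>0$, $\mu[\cdot|A]$ is the conditional measure. The size $\#\vec V$ of a partition $\vec V=(V_1,\dots,V_k)$ is $k$; $\vec W$ refines $\vec V$ if every class of $\vec W$ is contained in a class of $\vec V$. $\mu$ is $\varepsilon$-regular on $U\subset[n]$ if for every $S\subset U$ with $|S|\ge\varepsilon|U|$ we have $\langle\|\boldsymbol\sigma[\cdot|S]-\boldsymbol\sigma[\cdot|U]\|_{TV}\rangle_\mu<\varepsilon$. $\mu$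 is $\varepsilon$-regular with respect to a partition $\vec V$ of $[n]$ if there is $J\subset[\#\vec V]$ with $\sum_{i\notin J}|V_i|<\varepsilon n$ such that $\mu$ is $\varepsilon$-regular on $V_i$ for all $i\in J$. For a partition $\vec V$ of $[n]$ and a partition $\vec S$ of $\Omega^n$, $\mu$ is $\varepsilon$-homogeneous with respect to $(\vec V,\vec S)$ if there is $I\subset[\#\vec S]$ such that: (HM1) $\mu(S_i)>0$ for all $i\in I$ and $\sum_{i\notin I}\mu(S_i)<\varepsilon$; (HM2) for all $i\in[\#\vec S]$, $j\in[\#\vec V]$: $\max_{\sigma,\sigma'\in S_i}\|\sigma[\cdot|V_j]-\sigma'[\cdot|V_j]\|_{TV}<\varepsilon$; (HM3) for all $i\in I$, $\mu[\cdot|S_i]$ is $\varepsilon$-regular with respect to $\vec V$; (HM4) $\mu$ is $\varepsilon$-regular with respect to $\vec V$. *)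

theory Defs
  imports Complex_Main "HOL-Library.FuncSet"
begin

text \<open>[n] is rendered as {..<n}; Omega is a finite type 'a (nonempty as every type).
  Omega^n is the set of extensional functions {..<n} -> 'a.\<close>

definition cube :: "nat \<Rightarrow> (nat \<Rightarrow> 'a) set" where
  "cube n = PiE {..<n} (\<lambda>_. UNIV)"

definition is_prob :: "nat \<Rightarrow> ((nat \<Rightarrow> 'a) \<Rightarrow> real) \<Rightarrow> bool" where
  "is_prob n \<mu> \<longleftrightarrow> (\<forall>\<sigma>. 0 \<le> \<mu> \<sigma>) \<and> (\<forall>\<sigma>. \<sigma> \<notin> cube n \<longrightarrow> \<mu> \<sigma> = 0)
     \<and> (\<Sum>\<sigma>\<in>cube n. \<mu> \<sigma>) = 1"

definition mass :: "nat \<Rightarrow> ((nat \<Rightarrow> 'a) \<Rightarrow> real) \<Rightarrow> (nat \<Rightarrow> 'a) set \<Rightarrow> real" where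
  "mass n \<mu> A = (\<Sum>\<sigma>\<in>cube n \<inter> A. \<mu> \<sigma>)"

definition expect :: "nat \<Rightarrow> ((nat \<Rightarrow> 'a) \<Rightarrow> real) \<Rightarrow> ((nat \<Rightarrow> 'a) \<Rightarrow> real) \<Rightarrow> real" where
  "expect n \<mu> X = (\<Sum>\<sigma>\<in>cube n. \<mu> \<sigma> * X \<sigma>)"

definition cond :: "nat \<Rightarrow> ((nat \<Rightarrow> 'a) \<Rightarrow> real) \<Rightarrow> (nat \<Rightarrow> 'a) set \<Rightarrow> ((nat \<Rightarrow> 'a) \<Rightarrow> real)" where
  "cond n \<mu> A = (\<lambda>\<sigma>. if \<sigma> \<in> A then \<mu> \<sigma> / mass n \<mu> A else 0)"

definition emp :: "(nat \<Rightarrow> 'a) \<Rightarrow> nat set \<Rightarrow> 'a \<Rightarrow> real" where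
  "emp \<sigma> S \<omega> = real (card {i\<in>S. \<sigma> i = \<omega>}) / real (card S)"

definition tv :: "('a::finite \<Rightarrow> real) \<Rightarrow> ('a \<Rightarrow> real) \<Rightarrow> real" where
  "tv p q = (1/2) * (\<Sum>\<omega>\<in>UNIV. \<bar>p \<omega> - q \<omega>\<bar>)"

text \<open>A partition of X given as a list of nonempty, pairwise disjoint classes covering X;
  its size is the length of the list.\<close>
definition is_partition :: "'b set \<Rightarrow> 'b set list \<Rightarrow> bool" where
  "is_partition X Vs \<longleftrightarrow> (\<forall>V\<in>set Vs. V \<noteq> {}) \<and>
     (\<forall>i<length Vs. \<forall>j<length Vs. i \<noteq> j \<longrightarrow> Vs!i \<inter> Vs!j = {}) \<and> \<Union>(set Vs) = X"

definition refines :: "'b set list \<Rightarrow> 'b set list \<Rightarrow> bool" where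
  "refines Ws Vs \<longleftrightarrow> (\<forall>W\<in>set Ws. \<exists>V\<in>set Vs. W \<subseteq> V)"

definition regular_on :: "nat \<Rightarrow> ((nat \<Rightarrow> 'a::finite) \<Rightarrow> real) \<Rightarrow> real \<Rightarrow> nat set \<Rightarrow> bool" where
  "regular_on n \<mu> \<epsilon> U \<longleftrightarrow> (\<forall>S. S \<subseteq> U \<and> real (card S) \<ge> \<epsilon> * real (card U) \<longrightarrow>
      expect n \<mu> (\<lambda>\<sigma>. tv (emp \<sigma> S) (emp \<sigma> U)) < \<epsilon>)"

definition regular_wrt :: "nat \<Rightarrow> ((nat \<Rightarrow> 'a::finite) \<Rightarrow> real) \<Rightarrow> real \<Rightarrow> nat set list \<Rightarrow> bool" where
  "regular_wrt n \<mu> \<epsilon> Vs \<longleftrightarrow> (\<exists>J \<subseteq> {..<length Vs}.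
      real (\<Sum>i\<in>{..<length Vs} - J. card (Vs!i)) < \<epsilon> * real n \<and>
      (\<forall>i\<in>J. regular_on n \<mu> \<epsilon> (Vs!i)))"

definition homogeneous :: "nat \<Rightarrow> ((nat \<Rightarrow> 'a::finite) \<Rightarrow> real) \<Rightarrow> real \<Rightarrow> nat set list
    \<Rightarrow> (nat \<Rightarrow> 'a) set list \<Rightarrow> bool" where
  "homogeneous n \<mu> \<epsilon> Vs Ss \<longleftrightarrow> (\<exists>I \<subseteq> {..<length Ss}.
      (\<forall>i\<in>I. mass n \<mu> (Ss!i) > 0) \<and>
      (\<Sum>i\<in>{..<length Ss} - I. mass n \<mu> (Ss!i)) < \<epsilon> \<and>
      (\<forall>i<length Ss. \<forall>j<length Vs. \<forall>\<sigma>\<in>Ss!i. \<forall>\<sigma>'\<in>Ss!i.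
          tv (emp \<sigma> (Vs!j)) (emp \<sigma>' (Vs!j)) < \<epsilon>) \<and>
      (\<forall>i\<in>I. regular_wrt n (cond n \<mu> (Ss!i)) \<epsilon> Vs) \<and>
      regular_wrt n \<mu> \<epsilon> Vs)"

end

theory Submission
  imports Defs "HOL-Library.Cardinality"
begin

text \<open>For a partition \<open>Vs\<close> of \<open>[n]\<close> consider the index
  \<open>\<langle>\<Sum>W\<in>Vs. |W| \<parallel>\<sigma>[\<cdot>|W]\<parallel>\<^sub>2\<^sup>2\<rangle>\<^sub>\<mu>\<close>, which lies in \<open>[0, |\<Omega>| n]\<close> and does not decrease
  under refinement. Partition \<open>\<Omega>\<^sup>n\<close> according to the empirical distributions on the classes
  of \<open>Vs\<close>, rounded to the grid of mesh \<open>1/R\<close>; this gives (HM2) for free. If homogeneity still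
  fails, then \<open>\<mu>\<close> itself, or the conditional measures on classes of total mass at least \<open>\<epsilon>\<close>,
  are irregular on classes of \<open>Vs\<close> covering at least \<open>\<epsilon> n\<close> points. Splitting an irregular
  class \<open>U\<close> along its witness \<open>S\<close> raises the energy of \<open>U\<close> by \<open>|S| \<parallel>\<sigma>[\<cdot>|S] - \<sigma>[\<cdot>|U]\<parallel>\<^sub>2\<^sup>2\<close>,
  which is of order \<open>\<epsilon>\<^sup>3 |U|\<close> on average, so the common refinement of \<open>Vs\<close> with all witnesses
  raises the index by \<open>c n\<close> with \<open>c = c(\<epsilon>, \<Omega>)\<close>. Hence after at most \<open>|\<Omega>|/c\<close> rounds the
  partition is homogeneous, and all sizes stay below an iterated exponential.\<close>

section \<open>Partitions\<close>

definition list_of_set :: "'b set \<Rightarrow> 'b list" where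
  "list_of_set A = (SOME xs. set xs = A \<and> distinct xs)"

lemma set_distinct_list_of_set: "finite A \<Longrightarrow> set (list_of_set A) = A \<and> distinct (list_of_set A)"
  unfolding list_of_set_def by (rule someI_ex) (rule finite_distinct_list)

definition fibres :: "('b \<Rightarrow> 'c) \<Rightarrow> 'b set \<Rightarrow> 'b set list" where
  "fibres f X = map (\<lambda>p. {x\<in>X. f x = p}) (list_of_set (f ` X))"

lemma set_fibres: "finite X \<Longrightarrow> set (fibres f X) = (\<lambda>p. {x\<in>X. f x = p}) ` f ` X"
  unfolding fibres_def using set_distinct_list_of_set[of "f ` X"] by auto

lemma length_fibres: "finite X \<Longrightarrow> length (fibres f X) = card (f ` X)"
  unfolding fibres_def using set_distinct_list_of_set[of "f ` X"] by (metis distinct_card length_map finite_imageI)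

lemma fibres_const: "finite X \<Longrightarrow> W \<in> set (fibres f X) \<Longrightarrow> x \<in> W \<Longrightarrow> y \<in> W \<Longrightarrow> f x = f y"
  by (auto simp: set_fibres)

lemma is_partition_fibres:
  assumes "finite X"
  shows "is_partition X (fibres f X)"
  unfolding is_partition_def
proof (intro conjI allI impI ballI)
  fix i j assume ij: "i < length (fibres f X)" "j < length (fibres f X)" "i \<noteq> j"
  have "distinct (list_of_set (f ` X))" using set_distinct_list_of_set assms by blast
  then have "list_of_set (f ` X) ! i \<noteq> list_of_set (f ` X) ! j"
    using ij by (simp add: fibres_def nth_eq_iff_index_eq)
  then show "fibres f X ! i \<inter> fibres f X ! j = {}" using ij by (auto simp: fibres_def)
qed (use assms in \<open>auto simp: set_fibres\<close>)

lemma is_partition_nonempty: "is_partition X Vs \<Longrightarrow> V \<in> set Vs \<Longrightarrow> V \<noteq> {}"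
  unfolding is_partition_def by auto

lemma is_partition_Union: "is_partition X Vs \<Longrightarrow> \<Union>(set Vs) = X"
  unfolding is_partition_def by auto

lemma is_partition_disjoint:
  "is_partition X Vs \<Longrightarrow> U \<in> set Vs \<Longrightarrow> W \<in> set Vs \<Longrightarrow> U \<noteq> W \<Longrightarrow> U \<inter> W = {}"
  unfolding is_partition_def by (metis in_set_conv_nth)

lemma is_partition_pairwise_disjnt: "is_partition X Vs \<Longrightarrow> pairwise disjnt (set Vs)"
  unfolding pairwise_def disjnt_def using is_partition_disjoint by blast

lemma is_partition_distinct:
  assumes "is_partition X Vs"
  shows "distinct Vs"
  unfolding distinct_conv_nth
proof (intro allI impI)
  fix i j assume "i < length Vs" "j < length Vs" "i \<noteq> j"
  then have "Vs!i \<inter> Vs!j = {}" "Vs!i \<noteq> {}" using assms unfolding is_partition_def by auto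
  then show "Vs!i \<noteq> Vs!j" by auto
qed

lemma is_partition_finite_class: "is_partition X Vs \<Longrightarrow> finite X \<Longrightarrow> V \<in> set Vs \<Longrightarrow> finite V"
  using is_partition_Union[of X Vs] by (metis Union_upper finite_subset)

lemma is_partition_singleton: "X \<noteq> {} \<Longrightarrow> is_partition X [X]"
  unfolding is_partition_def by simp

lemma sum_card_is_partition:
  assumes "is_partition X Vs" "finite X"
  shows "(\<Sum>V\<in>set Vs. card V) = card X"
  using card_Union_disjoint[OF is_partition_pairwise_disjnt[OF assms(1)]]
    is_partition_finite_class[OF assms] is_partition_Union[OF assms(1)] by simp

lemma sum_is_partition:
  assumes "is_partition X Cs" "finite X"
  shows "sum f X = (\<Sum>C\<in>set Cs. sum f C)"
  using sum.Union_disjoint[of "set Cs" f] is_partition_finite_class[OF assms]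
    is_partition_Union[OF assms(1)] is_partition_pairwise_disjnt[OF assms(1)]
  by (simp add: pairwise_def disjnt_def)

lemma refines_refl: "refines Vs Vs"
  unfolding refines_def by auto

lemma refines_trans: "refines Us Vs \<Longrightarrow> refines Vs Ws \<Longrightarrow> refines Us Ws"
  unfolding refines_def by (meson order_trans)

lemma sum_refining_partition:
  assumes Vs: "is_partition X Vs" and Ws: "is_partition Y Ws" and "refines Ws Vs"
  shows "(\<Sum>W\<in>set Ws. f W) = (\<Sum>V\<in>set Vs. \<Sum>W\<in>{W\<in>set Ws. W \<subseteq> V}. f W)"
proof -
  have "set Ws = (\<Union>V\<in>set Vs. {W\<in>set Ws. W \<subseteq> V})"
    using \<open>refines Ws Vs\<close> unfolding refines_def by blast
  then have "sum f (set Ws) = sum f (\<Union>V\<in>set Vs. {W\<in>set Ws. W \<subseteq> V})"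
    by (rule arg_cong)
  also have "\<dots> = (\<Sum>V\<in>set Vs. \<Sum>W\<in>{W\<in>set Ws. W \<subseteq> V}. f W)"
  proof (rule sum.UNION_disjoint)
    show "\<forall>U\<in>set Vs. \<forall>V\<in>set Vs. U \<noteq> V \<longrightarrow> {W\<in>set Ws. W \<subseteq> U} \<inter> {W\<in>set Ws. W \<subseteq> V} = {}"
    proof (intro ballI impI)
      fix U V assume UV: "U \<in> set Vs" "V \<in> set Vs" "U \<noteq> V"
      have "W = {}" if "W \<subseteq> U" "W \<subseteq> V" for W
        using that is_partition_disjoint[OF Vs UV] by blast
      then show "{W\<in>set Ws. W \<subseteq> U} \<inter> {W\<in>set Ws. W \<subseteq> V} = {}"
        using is_partition_nonempty[OF Ws] by blast
    qed
  qed simp_all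
  finally show ?thesis .
qed

lemma sum_nth_filter:
  assumes "distinct xs"
  shows "(\<Sum>i\<in>{i. i < length xs \<and> P (xs!i)}. f (xs!i)) = (\<Sum>x\<in>{x\<in>set xs. P x}. f x)"
proof -
  have "inj_on ((!) xs) {i. i < length xs \<and> P (xs!i)}"
    using assms by (auto intro!: inj_onI simp: nth_eq_iff_index_eq)
  moreover have "(!) xs ` {i. i < length xs \<and> P (xs!i)} = {x\<in>set xs. P x}"
    by (auto simp: in_set_conv_nth)
  ultimately show ?thesis using sum.reindex[of "(!) xs" "{i. i < length xs \<and> P (xs!i)}" f] by simp
qed

lemma sum_filter_le_sum:
  fixes f g :: "'b \<Rightarrow> 'c::ordered_comm_monoid_add"
  assumes "finite A" "\<And>x. x \<in> A \<Longrightarrow> P x \<Longrightarrow> f x \<le> g x" "\<And>x. x \<in> A \<Longrightarrow> \<not> P x \<Longrightarrow> 0 \<le> g x"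
  shows "(\<Sum>x\<in>{x\<in>A. P x}. f x) \<le> (\<Sum>x\<in>A. g x)"
proof -
  have "(\<Sum>x\<in>{x\<in>A. P x}. f x) = (\<Sum>x\<in>A. if P x then f x else 0)"
    by (rule sum.inter_filter[OF assms(1)])
  also have "\<dots> \<le> (\<Sum>x\<in>A. g x)" by (rule sum_mono) (use assms in auto)
  finally show ?thesis .
qed

definition common_refinement :: "'b set \<Rightarrow> 'b set list \<Rightarrow> 'b set set \<Rightarrow> 'b set list" where
  "common_refinement X Vs F = fibres (\<lambda>x. ({V\<in>set Vs. x \<in> V}, {A\<in>F. x \<in> A})) X"

lemma is_partition_common_refinement: "finite X \<Longrightarrow> is_partition X (common_refinement X Vs F)"
  unfolding common_refinement_def by (rule is_partition_fibres)

lemma length_common_refinement: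
  assumes "finite X" "finite F"
  shows "length (common_refinement X Vs F) \<le> 2 ^ length Vs * 2 ^ card F"
proof -
  have "(\<lambda>x. ({V\<in>set Vs. x \<in> V}, {A\<in>F. x \<in> A})) ` X \<subseteq> Pow (set Vs) \<times> Pow F" by auto
  then have "card ((\<lambda>x. ({V\<in>set Vs. x \<in> V}, {A\<in>F. x \<in> A})) ` X) \<le> card (Pow (set Vs) \<times> Pow F)"
    by (intro card_mono) (auto simp: assms)
  also have "\<dots> = 2 ^ card (set Vs) * 2 ^ card F"
    by (simp add: card_cartesian_product card_Pow assms)
  also have "\<dots> \<le> 2 ^ length Vs * 2 ^ card F" by (simp add: card_length)
  finally show ?thesis unfolding common_refinement_def by (simp add: length_fibres assms)
qed

lemma common_refinement_subset_or_disjoint: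
  assumes "finite X" "W \<in> set (common_refinement X Vs F)" "A \<in> set Vs \<union> F"
  shows "W \<subseteq> A \<or> W \<inter> A = {}"
proof (rule ccontr)
  assume "\<not> (W \<subseteq> A \<or> W \<inter> A = {})"
  then obtain x y where "x \<in> W" "x \<notin> A" "y \<in> W" "y \<in> A" by auto
  moreover have "({V\<in>set Vs. x \<in> V}, {A\<in>F. x \<in> A}) = ({V\<in>set Vs. y \<in> V}, {A\<in>F. y \<in> A})"
    using fibres_const[OF assms(1) assms(2)[unfolded common_refinement_def]] \<open>x \<in> W\<close> \<open>y \<in> W\<close>
    by blast
  ultimately show False using assms(3) by blast
qed

lemma refines_common_refinement:
  assumes "finite X" "is_partition X Vs"
  shows "refines (common_refinement X Vs F) Vs"
  unfolding refines_def
proof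
  fix W assume W: "W \<in> set (common_refinement X Vs F)"
  then obtain x where "x \<in> W"
    using is_partition_nonempty[OF is_partition_common_refinement[OF assms(1)]] by blast
  moreover have "W \<subseteq> X" using W is_partition_Union[OF is_partition_common_refinement[OF assms(1)]] by blast
  ultimately obtain V where "V \<in> set Vs" "x \<in> V" using is_partition_Union[OF assms(2)] by blast
  then show "\<exists>V\<in>set Vs. W \<subseteq> V"
    using common_refinement_subset_or_disjoint[OF assms(1) W, of V] \<open>x \<in> W\<close> by blast
qed

section \<open>Energy of a configuration on a set\<close>

definition occ :: "(nat \<Rightarrow> 'a) \<Rightarrow> nat set \<Rightarrow> 'a \<Rightarrow> real" where
  "occ \<sigma> W \<omega> = real (card {i\<in>W. \<sigma> i = \<omega>})"

definition energy :: "(nat \<Rightarrow> 'a::finite) \<Rightarrow> nat set \<Rightarrow> real" where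
  "energy \<sigma> W = (\<Sum>\<omega>\<in>UNIV. occ \<sigma> W \<omega> ^ 2 / real (card W))"

definition sq_dist :: "('a::finite \<Rightarrow> real) \<Rightarrow> ('a \<Rightarrow> real) \<Rightarrow> real" where
  "sq_dist p q = (\<Sum>\<omega>\<in>UNIV. (p \<omega> - q \<omega>)^2)"

lemma sq_dist_nonneg: "0 \<le> sq_dist p q"
  unfolding sq_dist_def by (intro sum_nonneg) simp

lemma emp_eq_occ: "emp \<sigma> W \<omega> = occ \<sigma> W \<omega> / real (card W)"
  unfolding emp_def occ_def ..

lemma emp_nonneg: "0 \<le> emp \<sigma> W \<omega>"
  unfolding emp_def by simp

lemma emp_le_1: "emp \<sigma> W \<omega> \<le> 1"
proof (cases "finite W")
  case True
  then have "card {i\<in>W. \<sigma> i = \<omega>} \<le> card W" by (intro card_mono) auto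
  then show ?thesis unfolding emp_def by (cases "card W = 0") (simp_all add: divide_le_eq_1)
qed (simp add: emp_def)

lemma occ_nonneg: "0 \<le> occ \<sigma> W \<omega>"
  unfolding occ_def by simp

lemma occ_le_card: "finite W \<Longrightarrow> occ \<sigma> W \<omega> \<le> real (card W)"
  unfolding occ_def by (simp add: card_mono)

lemma occ_Un: "finite X \<Longrightarrow> finite Y \<Longrightarrow> X \<inter> Y = {} \<Longrightarrow> occ \<sigma> (X \<union> Y) \<omega> = occ \<sigma> X \<omega> + occ \<sigma> Y \<omega>"
proof -
  assume XY: "finite X" "finite Y" "X \<inter> Y = {}"
  have "{i\<in>X \<union> Y. \<sigma> i = \<omega>} = {i\<in>X. \<sigma> i = \<omega>} \<union> {i\<in>Y. \<sigma> i = \<omega>}" by auto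
  moreover have "card ({i\<in>X. \<sigma> i = \<omega>} \<union> {i\<in>Y. \<sigma> i = \<omega>}) = card {i\<in>X. \<sigma> i = \<omega>} + card {i\<in>Y. \<sigma> i = \<omega>}"
    using XY by (intro card_Un_disjoint) auto
  ultimately show ?thesis unfolding occ_def by simp
qed

lemma sq_div_add_le:
  fixes a b x y :: real
  assumes "0 \<le> a" "0 \<le> b" "a \<le> x" "b \<le> y"
  shows "(a + b)^2 / (x + y) \<le> a^2 / x + b^2 / y"
proof (cases "x = 0 \<or> y = 0")
  case True then show ?thesis using assms by auto
next
  case False
  then have x: "x > 0" and y: "y > 0" using assms by auto
  have "(a + b)^2 * (x * y) \<le> (a^2 * y + b^2 * x) * (x + y)"
    using zero_le_power2[of "a * y - b * x"] by (simp add: power2_eq_square algebra_simps)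
  then show ?thesis using x y by (simp add: field_simps)
qed

lemma sq_div_add_gain:
  fixes a b s r :: real
  assumes "0 \<le> a" "0 \<le> b" "a \<le> s" "b \<le> r"
  shows "(a + b)^2 / (s + r) + s * (a / s - (a + b) / (s + r))^2 \<le> a^2 / s + b^2 / r"
proof (cases "s = 0 \<or> r = 0")
  case True
  then show ?thesis using assms by auto
next
  case False
  then have s: "s > 0" and r: "r > 0" using assms by auto
  have e1: "a / s - (a + b) / (s + r) = (a * r - b * s) / (s * (s + r))"
    using s r by (simp add: field_simps)
  have e2: "a^2 / s + b^2 / r - (a + b)^2 / (s + r) = (a * r - b * s)^2 / (s * r * (s + r))"
    using s r by (simp add: field_simps power2_eq_square)
  have "s * ((a * r - b * s) / (s * (s + r)))^2 = (a * r - b * s)^2 / (s * (s + r)^2)"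
    using s by (simp add: power_divide power_mult_distrib power2_eq_square)
  also have "\<dots> \<le> (a * r - b * s)^2 / (s * r * (s + r))"
  proof (rule divide_left_mono)
    show "s * r * (s + r) \<le> s * (s + r)^2" using s r by (simp add: power2_eq_square algebra_simps)
    show "0 < s * (s + r)^2 * (s * r * (s + r))" using s r by simp
  qed simp
  finally show ?thesis unfolding e1 using e2 by linarith
qed

lemma energy_nonneg: "0 \<le> energy \<sigma> W"
  unfolding energy_def by (intro sum_nonneg) auto

lemma energy_empty: "energy \<sigma> {} = 0"
  unfolding energy_def by simp

lemma energy_le_card:
  fixes \<sigma> :: "nat \<Rightarrow> 'a::finite"
  assumes "finite W"
  shows "energy \<sigma> W \<le> real CARD('a) * real (card W)"
proof -
  have "occ \<sigma> W \<omega> ^ 2 / real (card W) \<le> real (card W)" for \<omega>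
  proof (cases "card W = 0")
    case False
    have "occ \<sigma> W \<omega> ^ 2 \<le> real (card W) ^ 2"
      by (rule power_mono[OF occ_le_card[OF assms] occ_nonneg])
    then show ?thesis using False by (simp add: field_simps power2_eq_square)
  qed simp
  then have "energy \<sigma> W \<le> (\<Sum>\<omega>\<in>(UNIV::'a set). real (card W))"
    unfolding energy_def by (rule sum_mono)
  then show ?thesis by simp
qed

lemma energy_Un_le:
  assumes "finite X" "finite Y" "X \<inter> Y = {}"
  shows "energy \<sigma> (X \<union> Y) \<le> energy \<sigma> X + energy \<sigma> Y"
proof -
  have "occ \<sigma> (X \<union> Y) \<omega> ^ 2 / real (card (X \<union> Y))
      \<le> occ \<sigma> X \<omega> ^ 2 / real (card X) + occ \<sigma> Y \<omega> ^ 2 / real (card Y)" for \<omega>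
    unfolding occ_Un[OF assms] card_Un_disjoint[OF assms] of_nat_add
    by (rule sq_div_add_le) (auto simp: occ_nonneg occ_le_card assms)
  then show ?thesis unfolding energy_def sum.distrib[symmetric] by (rule sum_mono)
qed

lemma energy_Union_le:
  assumes "finite \<W>" "\<forall>W\<in>\<W>. finite W" "pairwise disjnt \<W>"
  shows "energy \<sigma> (\<Union>\<W>) \<le> (\<Sum>W\<in>\<W>. energy \<sigma> W)"
  using assms
proof (induction \<W> rule: finite_induct)
  case (insert W \<W>)
  have "energy \<sigma> (\<Union>(insert W \<W>)) \<le> energy \<sigma> W + energy \<sigma> (\<Union>\<W>)"
    using insert by (auto intro!: energy_Un_le simp: pairwise_insert disjnt_def)
  also have "\<dots> \<le> energy \<sigma> W + (\<Sum>W\<in>\<W>. energy \<sigma> W)"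
    using insert by (simp add: pairwise_insert)
  finally show ?case using insert by simp
qed (simp add: energy_empty)

lemma energy_split_gain:
  assumes "finite U" "S \<subseteq> U"
  shows "energy \<sigma> U + real (card S) * sq_dist (emp \<sigma> S) (emp \<sigma> U) \<le> energy \<sigma> S + energy \<sigma> (U - S)"
proof -
  have fin: "finite S" "finite (U - S)" using assms finite_subset by auto
  have disj: "S \<inter> (U - S) = {}" by blast
  have U: "S \<union> (U - S) = U" using assms by blast
  have card: "card U = card S + card (U - S)"
    using card_Un_disjoint[OF fin disj] unfolding U .
  have occ: "occ \<sigma> U \<omega> = occ \<sigma> S \<omega> + occ \<sigma> (U - S) \<omega>" for \<omega>
    using occ_Un[OF fin disj] unfolding U .
  have "occ \<sigma> U \<omega> ^ 2 / real (card U) + real (card S) * (emp \<sigma> S \<omega> - emp \<sigma> U \<omega>)^2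
      \<le> occ \<sigma> S \<omega> ^ 2 / real (card S) + occ \<sigma> (U - S) \<omega> ^ 2 / real (card (U - S))" for \<omega>
    unfolding emp_eq_occ occ card of_nat_add
    by (rule sq_div_add_gain) (auto simp: occ_nonneg occ_le_card fin)
  then show ?thesis
    unfolding energy_def sq_dist_def sum_distrib_left sum.distrib[symmetric] by (rule sum_mono)
qed

lemma energy_le_sum_inside:
  assumes fin: "finite \<W>" "\<forall>W\<in>\<W>. finite W" and disj: "pairwise disjnt \<W>"
    and cover: "V \<subseteq> \<Union>\<W>" and inside: "\<forall>W\<in>\<W>. W \<inter> V \<noteq> {} \<longrightarrow> W \<subseteq> V"
  shows "energy \<sigma> V \<le> (\<Sum>W\<in>{W\<in>\<W>. W \<subseteq> V}. energy \<sigma> W)"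
proof -
  have V: "\<Union>{W\<in>\<W>. W \<subseteq> V} = V"
  proof
    show "V \<subseteq> \<Union>{W\<in>\<W>. W \<subseteq> V}"
    proof
      fix x assume "x \<in> V"
      then obtain W where W: "W \<in> \<W>" "x \<in> W" using cover by blast
      then have "W \<subseteq> V" using inside \<open>x \<in> V\<close> by blast
      then show "x \<in> \<Union>{W\<in>\<W>. W \<subseteq> V}" using W by blast
    qed
  qed blast
  have "energy \<sigma> (\<Union>{W\<in>\<W>. W \<subseteq> V}) \<le> (\<Sum>W\<in>{W\<in>\<W>. W \<subseteq> V}. energy \<sigma> W)"
    by (rule energy_Union_le) (use fin pairwise_subset[OF disj] in auto)
  then show ?thesis unfolding V .
qed

lemma energy_split_le_sum_inside:
  assumes Ws: "is_partition X Ws" and X: "finite X" and "U \<subseteq> X" "S \<subseteq> U"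
    and compatible: "\<forall>W\<in>set Ws. (W \<subseteq> U \<or> W \<inter> U = {}) \<and> (W \<subseteq> S \<or> W \<inter> S = {})"
  shows "energy \<sigma> S + energy \<sigma> (U - S) \<le> (\<Sum>W\<in>{W\<in>set Ws. W \<subseteq> U}. energy \<sigma> W)"
proof -
  have fin: "\<forall>W\<in>set Ws. finite W" using is_partition_finite_class[OF Ws X] by blast
  have disj: "pairwise disjnt (set Ws)" by (rule is_partition_pairwise_disjnt[OF Ws])
  have cover: "\<Union>(set Ws) = X" by (rule is_partition_Union[OF Ws])
  have "energy \<sigma> S \<le> (\<Sum>W\<in>{W\<in>set Ws. W \<subseteq> S}. energy \<sigma> W)"
    by (intro energy_le_sum_inside fin disj) (use assms(3,4) cover compatible in auto)
  moreover have "energy \<sigma> (U - S) \<le> (\<Sum>W\<in>{W\<in>set Ws. W \<subseteq> U - S}. energy \<sigma> W)"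
  proof (intro energy_le_sum_inside fin disj ballI impI)
    fix W assume "W \<in> set Ws" "W \<inter> (U - S) \<noteq> {}"
    then show "W \<subseteq> U - S" using compatible by blast
  qed (use assms(3) cover in auto)
  moreover have "{W\<in>set Ws. W \<subseteq> S} \<inter> {W\<in>set Ws. W \<subseteq> U - S} = {}"
    using is_partition_nonempty[OF Ws] by blast
  then have "(\<Sum>W\<in>{W\<in>set Ws. W \<subseteq> S}. energy \<sigma> W) + (\<Sum>W\<in>{W\<in>set Ws. W \<subseteq> U - S}. energy \<sigma> W)
      = (\<Sum>W\<in>{W\<in>set Ws. W \<subseteq> S} \<union> {W\<in>set Ws. W \<subseteq> U - S}. energy \<sigma> W)"
    by (intro sum.union_disjoint[symmetric]) auto
  moreover have "\<dots> \<le> (\<Sum>W\<in>{W\<in>set Ws. W \<subseteq> U}. energy \<sigma> W)"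
    using assms(4) by (intro sum_mono2) (auto simp: energy_nonneg)
  ultimately show ?thesis by linarith
qed

lemma energy_split_le_common_refinement:
  assumes X: "finite X" and Vs: "is_partition X Vs" and S: "\<forall>U\<in>set Vs. S U \<subseteq> U \<and> S U \<in> F"
  shows "(\<Sum>U\<in>set Vs. energy \<sigma> (S U) + energy \<sigma> (U - S U))
    \<le> (\<Sum>W\<in>set (common_refinement X Vs F). energy \<sigma> W)"
proof -
  let ?Ws = "common_refinement X Vs F"
  have Ws: "is_partition X ?Ws" using is_partition_common_refinement[OF X] .
  have "(\<Sum>U\<in>set Vs. energy \<sigma> (S U) + energy \<sigma> (U - S U))
      \<le> (\<Sum>U\<in>set Vs. \<Sum>W\<in>{W\<in>set ?Ws. W \<subseteq> U}. energy \<sigma> W)"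
  proof (rule sum_mono)
    fix U assume U: "U \<in> set Vs"
    show "energy \<sigma> (S U) + energy \<sigma> (U - S U) \<le> (\<Sum>W\<in>{W\<in>set ?Ws. W \<subseteq> U}. energy \<sigma> W)"
    proof (rule energy_split_le_sum_inside[OF Ws X])
      show "U \<subseteq> X" using U is_partition_Union[OF Vs] by blast
      show "S U \<subseteq> U" using S U by blast
      show "\<forall>W\<in>set ?Ws. (W \<subseteq> U \<or> W \<inter> U = {}) \<and> (W \<subseteq> S U \<or> W \<inter> S U = {})"
        using common_refinement_subset_or_disjoint[OF X] S U by blast
    qed
  qed
  also have "\<dots> = (\<Sum>W\<in>set ?Ws. energy \<sigma> W)"
    by (rule sum_refining_partition[OF Vs Ws refines_common_refinement[OF X Vs], symmetric])
  finally show ?thesis .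
qed

section \<open>The index of a partition\<close>

lemma finite_cube: "finite (cube n :: (nat \<Rightarrow> 'a::finite) set)"
  unfolding cube_def by (intro finite_PiE) auto

lemma cube_nonempty: "cube n \<noteq> {}"
  unfolding cube_def by (simp add: PiE_eq_empty_iff)

definition partition_index :: "nat \<Rightarrow> ((nat \<Rightarrow> 'a::finite) \<Rightarrow> real) \<Rightarrow> nat set list \<Rightarrow> real" where
  "partition_index n \<mu> Vs = (\<Sum>\<sigma>\<in>cube n. \<mu> \<sigma> * (\<Sum>W\<in>set Vs. energy \<sigma> W))"

definition split_gain :: "((nat \<Rightarrow> 'a::finite) \<Rightarrow> real) \<Rightarrow> (nat \<Rightarrow> 'a) set \<Rightarrow> nat set list
    \<Rightarrow> (nat set \<Rightarrow> nat set) \<Rightarrow> real" where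
  "split_gain \<mu> C Vs S =
     (\<Sum>U\<in>set Vs. real (card (S U)) * (\<Sum>\<sigma>\<in>C. \<mu> \<sigma> * sq_dist (emp \<sigma> (S U)) (emp \<sigma> U)))"

lemma split_gain_eq_sum_class:
  "split_gain \<mu> C Vs S =
     (\<Sum>\<sigma>\<in>C. \<mu> \<sigma> * (\<Sum>U\<in>set Vs. real (card (S U)) * sq_dist (emp \<sigma> (S U)) (emp \<sigma> U)))"
  unfolding split_gain_def sum_distrib_left by (subst sum.swap) (simp add: mult_ac)

lemma split_gain_nonneg: "\<forall>\<sigma>. 0 \<le> \<mu> \<sigma> \<Longrightarrow> 0 \<le> split_gain \<mu> C Vs S"
  unfolding split_gain_def by (intro sum_nonneg mult_nonneg_nonneg) (auto simp: sq_dist_nonneg)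

lemma partition_index_nonneg: "is_prob n \<mu> \<Longrightarrow> 0 \<le> partition_index n \<mu> Vs"
  unfolding partition_index_def is_prob_def
  by (intro sum_nonneg mult_nonneg_nonneg) (auto intro: sum_nonneg energy_nonneg)

lemma partition_index_le:
  fixes \<mu> :: "(nat \<Rightarrow> 'a::finite) \<Rightarrow> real"
  assumes prob: "is_prob n \<mu>" and Vs: "is_partition {..<n} Vs"
  shows "partition_index n \<mu> Vs \<le> real CARD('a) * real n"
proof -
  have "(\<Sum>W\<in>set Vs. energy \<sigma> W) \<le> real CARD('a) * real n" for \<sigma> :: "nat \<Rightarrow> 'a"
  proof -
    have "(\<Sum>W\<in>set Vs. energy \<sigma> W) \<le> (\<Sum>W\<in>set Vs. real CARD('a) * real (card W))"
      using is_partition_finite_class[OF Vs] by (intro sum_mono energy_le_card) blast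
    also have "\<dots> = real CARD('a) * real (\<Sum>W\<in>set Vs. card W)"
      by (simp add: sum_distrib_left)
    also have "\<dots> = real CARD('a) * real n"
      using sum_card_is_partition[OF Vs] by simp
    finally show ?thesis .
  qed
  then have "partition_index n \<mu> Vs \<le> (\<Sum>\<sigma>\<in>cube n. \<mu> \<sigma> * (real CARD('a) * real n))"
    unfolding partition_index_def using prob unfolding is_prob_def by (intro sum_mono mult_left_mono) auto
  also have "\<dots> = (\<Sum>\<sigma>\<in>cube n. \<mu> \<sigma>) * (real CARD('a) * real n)"
    by (rule sum_distrib_right[symmetric])
  also have "\<dots> = real CARD('a) * real n"
    using prob unfolding is_prob_def by simp
  finally show ?thesis .
qed

lemma partition_index_common_refinement:
  fixes \<mu> :: "(nat \<Rightarrow> 'a::finite) \<Rightarrow> real"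
  assumes Vs: "is_partition {..<n} Vs" and Ss: "is_partition (cube n) Ss"
    and S: "\<forall>C\<in>set Ss. \<forall>U\<in>set Vs. S C U \<subseteq> U" and \<mu>: "\<forall>\<sigma>. 0 \<le> \<mu> \<sigma>"
  shows "partition_index n \<mu> Vs + (\<Sum>C\<in>set Ss. split_gain \<mu> C Vs (S C))
    \<le> partition_index n \<mu> (common_refinement {..<n} Vs ((\<lambda>(C, U). S C U) ` (set Ss \<times> set Vs)))"
    (is "_ \<le> partition_index n \<mu> ?Ws")
proof -
  have pointwise: "(\<Sum>U\<in>set Vs. energy \<sigma> U)
      + (\<Sum>U\<in>set Vs. real (card (S C U)) * sq_dist (emp \<sigma> (S C U)) (emp \<sigma> U))
      \<le> (\<Sum>W\<in>set ?Ws. energy \<sigma> W)" if C: "C \<in> set Ss" for C \<sigma>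
  proof -
    have "(\<Sum>U\<in>set Vs. energy \<sigma> U)
        + (\<Sum>U\<in>set Vs. real (card (S C U)) * sq_dist (emp \<sigma> (S C U)) (emp \<sigma> U))
        \<le> (\<Sum>U\<in>set Vs. energy \<sigma> (S C U) + energy \<sigma> (U - S C U))"
      unfolding sum.distrib[symmetric]
    proof (rule sum_mono)
      fix U assume U: "U \<in> set Vs"
      show "energy \<sigma> U + real (card (S C U)) * sq_dist (emp \<sigma> (S C U)) (emp \<sigma> U)
          \<le> energy \<sigma> (S C U) + energy \<sigma> (U - S C U)"
        using is_partition_finite_class[OF Vs _ U] S C U by (intro energy_split_gain) auto
    qed
    also have "\<dots> \<le> (\<Sum>W\<in>set ?Ws. energy \<sigma> W)"
    proof (rule energy_split_le_common_refinement[OF _ Vs])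
      show "\<forall>U\<in>set Vs. S C U \<subseteq> U \<and> S C U \<in> (\<lambda>(C, U). S C U) ` (set Ss \<times> set Vs)"
        using S C by (auto intro: rev_image_eqI)
    qed simp
    finally show ?thesis .
  qed
  have "partition_index n \<mu> Vs + (\<Sum>C\<in>set Ss. split_gain \<mu> C Vs (S C))
      = (\<Sum>C\<in>set Ss. \<Sum>\<sigma>\<in>C. \<mu> \<sigma> * ((\<Sum>U\<in>set Vs. energy \<sigma> U)
          + (\<Sum>U\<in>set Vs. real (card (S C U)) * sq_dist (emp \<sigma> (S C U)) (emp \<sigma> U))))"
    unfolding partition_index_def split_gain_eq_sum_class sum_is_partition[OF Ss finite_cube]
    by (simp only: distrib_left sum.distrib)
  also have "\<dots> \<le> (\<Sum>C\<in>set Ss. \<Sum>\<sigma>\<in>C. \<mu> \<sigma> * (\<Sum>W\<in>set ?Ws. energy \<sigma> W))"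
    using pointwise \<mu> by (intro sum_mono mult_left_mono) auto
  also have "\<dots> = partition_index n \<mu> ?Ws"
    unfolding partition_index_def sum_is_partition[OF Ss finite_cube] ..
  finally show ?thesis .
qed

lemma refinement_with_split_gain:
  fixes \<mu> :: "(nat \<Rightarrow> 'a::finite) \<Rightarrow> real"
  assumes Vs: "is_partition {..<n} Vs" and Ss: "is_partition (cube n) Ss"
    and S: "\<forall>C\<in>set Ss. \<forall>U\<in>set Vs. S C U \<subseteq> U" and \<mu>: "\<forall>\<sigma>. 0 \<le> \<mu> \<sigma>"
  shows "\<exists>Vs'. is_partition {..<n} Vs' \<and> refines Vs' Vs
    \<and> length Vs' \<le> 2 ^ length Vs * 2 ^ (length Ss * length Vs)
    \<and> partition_index n \<mu> Vs + (\<Sum>C\<in>set Ss. split_gain \<mu> C Vs (S C)) \<le> partition_index n \<mu> Vs'"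
proof (intro exI conjI)
  let ?F = "(\<lambda>(C, U). S C U) ` (set Ss \<times> set Vs)"
  let ?Ws = "common_refinement {..<n} Vs ?F"
  show "is_partition {..<n} ?Ws" by (rule is_partition_common_refinement) simp
  show "refines ?Ws Vs" by (rule refines_common_refinement[OF _ Vs]) simp
  show "partition_index n \<mu> Vs + (\<Sum>C\<in>set Ss. split_gain \<mu> C Vs (S C)) \<le> partition_index n \<mu> ?Ws"
    by (rule partition_index_common_refinement[OF Vs Ss S \<mu>])
  have "card ?F \<le> card (set Ss \<times> set Vs)" by (rule card_image_le) simp
  also have "\<dots> \<le> length Ss * length Vs"
    unfolding card_cartesian_product by (intro mult_le_mono card_length)
  finally have "(2::nat) ^ card ?F \<le> 2 ^ (length Ss * length Vs)" by (rule power_increasing) simp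
  moreover have "length ?Ws \<le> 2 ^ length Vs * 2 ^ card ?F"
    by (rule length_common_refinement) auto
  ultimately show "length ?Ws \<le> 2 ^ length Vs * 2 ^ (length Ss * length Vs)"
    by (meson le_trans mult_le_mono2)
qed

section \<open>Profile partitions\<close>

definition profile :: "nat \<Rightarrow> nat set list \<Rightarrow> (nat \<Rightarrow> 'a) \<Rightarrow> ('a \<Rightarrow> nat) list" where
  "profile R Vs \<sigma> = map (\<lambda>W \<omega>. nat \<lfloor>real R * emp \<sigma> W \<omega>\<rfloor>) Vs"

definition profile_partition :: "nat \<Rightarrow> nat \<Rightarrow> nat set list \<Rightarrow> (nat \<Rightarrow> 'a::finite) set list" where
  "profile_partition R n Vs = fibres (profile R Vs) (cube n)"

lemma is_partition_profile_partition: "is_partition (cube n) (profile_partition R n Vs)"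
  unfolding profile_partition_def by (rule is_partition_fibres[OF finite_cube])

lemma length_profile_partition:
  "length (profile_partition R n Vs :: (nat \<Rightarrow> 'a::finite) set list) \<le> (Suc R ^ CARD('a)) ^ length Vs"
proof -
  let ?G = "PiE (UNIV :: 'a set) (\<lambda>_. {..R})"
  have "nat \<lfloor>real R * emp \<sigma> W \<omega>\<rfloor> \<le> R" for \<sigma> :: "nat \<Rightarrow> 'a" and W \<omega>
  proof -
    have "real R * emp \<sigma> W \<omega> \<le> real R" by (rule mult_left_le[OF emp_le_1]) simp
    then show ?thesis by linarith
  qed
  then have "profile R Vs ` (cube n :: (nat \<Rightarrow> 'a) set) \<subseteq> {xs. set xs \<subseteq> ?G \<and> length xs = length Vs}"
    unfolding profile_def by auto
  then have "card (profile R Vs ` (cube n :: (nat \<Rightarrow> 'a) set))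
      \<le> card {xs. set xs \<subseteq> ?G \<and> length xs = length Vs}"
    by (intro card_mono finite_lists_length_eq finite_PiE) auto
  also have "\<dots> = (Suc R ^ CARD('a)) ^ length Vs"
    by (simp add: card_lists_length_eq card_PiE finite_PiE)
  finally show ?thesis
    unfolding profile_partition_def by (simp add: length_fibres finite_cube)
qed

lemma tv_emp_profile_partition:
  fixes \<sigma> \<sigma>' :: "nat \<Rightarrow> 'a::finite"
  assumes R: "real CARD('a) < \<epsilon> * real R"
    and C: "C \<in> set (profile_partition R n Vs)" "\<sigma> \<in> C" "\<sigma>' \<in> C" and W: "W \<in> set Vs"
  shows "tv (emp \<sigma> W) (emp \<sigma>' W) < \<epsilon>"
proof -
  have R0: "R > 0" using R by (cases "R = 0") auto
  have "0 < \<epsilon> * real R" using R by (simp add: order_le_less_trans[OF of_nat_0_le_iff])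
  then have e: "\<epsilon> > 0" using R0 by (simp add: zero_less_mult_iff)
  have "profile R Vs \<sigma> = profile R Vs \<sigma>'"
    using fibres_const[OF finite_cube C(1)[unfolded profile_partition_def] C(2,3)] .
  then have same: "nat \<lfloor>real R * emp \<sigma> W \<omega>\<rfloor> = nat \<lfloor>real R * emp \<sigma>' W \<omega>\<rfloor>" for \<omega>
    using W unfolding profile_def by (simp add: map_eq_conv fun_eq_iff)
  have close: "\<bar>emp \<sigma> W \<omega> - emp \<sigma>' W \<omega>\<bar> < 1 / real R" for \<omega>
  proof -
    have "\<lfloor>real R * emp \<sigma> W \<omega>\<rfloor> = \<lfloor>real R * emp \<sigma>' W \<omega>\<rfloor>"
      using same[of \<omega>] eq_nat_nat_iff by (simp add: emp_nonneg)
    then have "\<bar>real R * emp \<sigma> W \<omega> - real R * emp \<sigma>' W \<omega>\<bar> < 1" by linarith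
    then have "real R * \<bar>emp \<sigma> W \<omega> - emp \<sigma>' W \<omega>\<bar> < 1"
      by (simp add: abs_mult right_diff_distrib[symmetric])
    then show ?thesis using R0 by (simp add: field_simps)
  qed
  have "(\<Sum>\<omega>\<in>UNIV. \<bar>emp \<sigma> W \<omega> - emp \<sigma>' W \<omega>\<bar>) < (\<Sum>\<omega>\<in>(UNIV :: 'a set). 1 / real R)"
    by (rule sum_strict_mono) (auto simp: close)
  also have "\<dots> < \<epsilon>" using R R0 by (simp add: field_simps)
  finally show ?thesis
    unfolding tv_def using e by simp
qed

section \<open>Irregularity increases the index\<close>

lemma sq_dist_ge_linear_tv:
  fixes p q :: "'a::finite \<Rightarrow> real"
  shows "8 * e / real CARD('a) * tv p q - 4 * e^2 / real CARD('a) \<le> sq_dist p q"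
proof -
  define k where "k = real CARD('a)"
  have k: "k > 0" unfolding k_def by simp
  define a where "a = 2 * e / k"
  have "2 * a * \<bar>p \<omega> - q \<omega>\<bar> - a^2 \<le> (p \<omega> - q \<omega>)^2" for \<omega>
    using zero_le_power2[of "\<bar>p \<omega> - q \<omega>\<bar> - a"] by (simp add: power2_eq_square algebra_simps)
  then have "(\<Sum>\<omega>\<in>UNIV. 2 * a * \<bar>p \<omega> - q \<omega>\<bar> - a^2) \<le> sq_dist p q"
    unfolding sq_dist_def by (rule sum_mono)
  moreover have "(\<Sum>\<omega>\<in>UNIV. 2 * a * \<bar>p \<omega> - q \<omega>\<bar> - a^2) = 2 * a * (\<Sum>\<omega>\<in>UNIV. \<bar>p \<omega> - q \<omega>\<bar>) - k * a^2"
    by (simp add: sum_subtractf sum_distrib_left k_def)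
  moreover have "2 * a * (\<Sum>\<omega>\<in>UNIV. \<bar>p \<omega> - q \<omega>\<bar>) - k * a^2 = 8 * e / k * tv p q - 4 * e^2 / k"
    unfolding tv_def a_def using k by (simp add: power2_eq_square field_simps)
  ultimately show ?thesis unfolding k_def by linarith
qed

lemma weighted_sq_dist_ge_tv:
  fixes p q :: "'b \<Rightarrow> 'a::finite \<Rightarrow> real"
  assumes e: "0 \<le> \<epsilon>" and w: "\<forall>x\<in>C. 0 \<le> w x"
    and tv: "\<epsilon> * (\<Sum>x\<in>C. w x) \<le> (\<Sum>x\<in>C. w x * tv (p x) (q x))"
  shows "4 * \<epsilon>^2 / real CARD('a) * (\<Sum>x\<in>C. w x) \<le> (\<Sum>x\<in>C. w x * sq_dist (p x) (q x))"
proof -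
  define k where "k = real CARD('a)"
  have k: "k > 0" unfolding k_def by simp
  have "4 * \<epsilon>^2 / k * (\<Sum>x\<in>C. w x) = 8 * \<epsilon> / k * (\<epsilon> * (\<Sum>x\<in>C. w x)) - 4 * \<epsilon>^2 / k * (\<Sum>x\<in>C. w x)"
    by (simp add: power2_eq_square field_simps)
  also have "\<dots> \<le> 8 * \<epsilon> / k * (\<Sum>x\<in>C. w x * tv (p x) (q x)) - 4 * \<epsilon>^2 / k * (\<Sum>x\<in>C. w x)"
    using mult_left_mono[OF tv, of "8 * \<epsilon> / k"] e k by simp
  also have "\<dots> = (\<Sum>x\<in>C. w x * (8 * \<epsilon> / k * tv (p x) (q x) - 4 * \<epsilon>^2 / k))"
    by (simp add: sum_subtractf sum_distrib_left sum_distrib_right sum_divide_distrib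
        right_diff_distrib mult_ac)
  also have "\<dots> \<le> (\<Sum>x\<in>C. w x * sq_dist (p x) (q x))"
    unfolding k_def using w by (intro sum_mono mult_left_mono sq_dist_ge_linear_tv) auto
  finally show ?thesis unfolding k_def .
qed

lemma mass_eq_sum: "C \<subseteq> cube n \<Longrightarrow> mass n \<mu> C = (\<Sum>\<sigma>\<in>C. \<mu> \<sigma>)"
  unfolding mass_def by (simp add: Int_absorb1)

lemma mass_nonneg: "\<forall>\<sigma>. 0 \<le> \<mu> \<sigma> \<Longrightarrow> 0 \<le> mass n \<mu> C"
  unfolding mass_def by (intro sum_nonneg) auto

lemma mass_mult_expect_cond:
  fixes \<mu> :: "(nat \<Rightarrow> 'a::finite) \<Rightarrow> real"
  assumes "C \<subseteq> cube n" "mass n \<mu> C > 0"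
  shows "mass n \<mu> C * expect n (cond n \<mu> C) X = (\<Sum>\<sigma>\<in>C. \<mu> \<sigma> * X \<sigma>)"
proof -
  have "expect n (cond n \<mu> C) X = (\<Sum>\<sigma>\<in>cube n. if \<sigma> \<in> C then \<mu> \<sigma> * X \<sigma> / mass n \<mu> C else 0)"
    unfolding expect_def cond_def by (intro sum.cong) auto
  also have "\<dots> = (\<Sum>\<sigma>\<in>cube n \<inter> C. \<mu> \<sigma> * X \<sigma> / mass n \<mu> C)"
    by (simp add: sum.inter_restrict[OF finite_cube])
  also have "\<dots> = (\<Sum>\<sigma>\<in>C. \<mu> \<sigma> * X \<sigma>) / mass n \<mu> C"
    using assms(1) by (simp add: Int_absorb1 sum_divide_distrib)
  finally show ?thesis using assms(2) by simp
qed

lemma split_witness_of_not_regular_on: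
  fixes \<mu> :: "(nat \<Rightarrow> 'a::finite) \<Rightarrow> real"
  assumes e: "0 \<le> \<epsilon>" and \<mu>: "\<forall>\<sigma>. 0 \<le> \<mu> \<sigma>" and C: "C \<subseteq> cube n" "mass n \<mu> C > 0"
    and irregular: "\<not> regular_on n (cond n \<mu> C) \<epsilon> U"
  shows "\<exists>S\<subseteq>U. \<epsilon> * real (card U) * (4 * \<epsilon>^2 / real CARD('a) * mass n \<mu> C)
    \<le> real (card S) * (\<Sum>\<sigma>\<in>C. \<mu> \<sigma> * sq_dist (emp \<sigma> S) (emp \<sigma> U))"
proof -
  obtain S where S: "S \<subseteq> U" "\<epsilon> * real (card U) \<le> real (card S)"
    and tv: "\<epsilon> \<le> expect n (cond n \<mu> C) (\<lambda>\<sigma>. tv (emp \<sigma> S) (emp \<sigma> U))"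
    using irregular unfolding regular_on_def by auto
  have "\<epsilon> * mass n \<mu> C \<le> mass n \<mu> C * expect n (cond n \<mu> C) (\<lambda>\<sigma>. tv (emp \<sigma> S) (emp \<sigma> U))"
    using mult_right_mono[OF tv, of "mass n \<mu> C"] C(2) by (simp add: mult.commute)
  also have "\<dots> = (\<Sum>\<sigma>\<in>C. \<mu> \<sigma> * tv (emp \<sigma> S) (emp \<sigma> U))"
    by (rule mass_mult_expect_cond[OF C])
  finally have "\<epsilon> * (\<Sum>\<sigma>\<in>C. \<mu> \<sigma>) \<le> (\<Sum>\<sigma>\<in>C. \<mu> \<sigma> * tv (emp \<sigma> S) (emp \<sigma> U))"
    unfolding mass_eq_sum[OF C(1)] .
  from weighted_sq_dist_ge_tv[OF e _ this] \<mu>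
  have "4 * \<epsilon>^2 / real CARD('a) * mass n \<mu> C \<le> (\<Sum>\<sigma>\<in>C. \<mu> \<sigma> * sq_dist (emp \<sigma> S) (emp \<sigma> U))"
    unfolding mass_eq_sum[OF C(1)] by blast
  with S show ?thesis
    using e C(2) by (intro exI[of _ S] conjI mult_mono) auto
qed

lemma not_regular_wrt_le_card:
  assumes "distinct Vs" "\<not> regular_wrt n \<nu> \<epsilon> Vs"
  shows "\<epsilon> * real n \<le> (\<Sum>U\<in>{U\<in>set Vs. \<not> regular_on n \<nu> \<epsilon> U}. real (card U))"
proof -
  define J where "J = {i. i < length Vs \<and> regular_on n \<nu> \<epsilon> (Vs!i)}"
  have "{..<length Vs} - J = {i. i < length Vs \<and> \<not> regular_on n \<nu> \<epsilon> (Vs!i)}"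
    unfolding J_def by auto
  moreover have "J \<subseteq> {..<length Vs}" "\<forall>i\<in>J. regular_on n \<nu> \<epsilon> (Vs!i)"
    unfolding J_def by auto
  then have "\<not> real (\<Sum>i\<in>{..<length Vs} - J. card (Vs!i)) < \<epsilon> * real n"
    using assms(2) unfolding regular_wrt_def by blast
  ultimately have "\<epsilon> * real n \<le> (\<Sum>i\<in>{i. i < length Vs \<and> \<not> regular_on n \<nu> \<epsilon> (Vs!i)}. real (card (Vs!i)))"
    by simp
  also have "\<dots> = (\<Sum>U\<in>{U\<in>set Vs. \<not> regular_on n \<nu> \<epsilon> U}. real (card U))"
    by (rule sum_nth_filter[OF assms(1)])
  finally show ?thesis .
qed

lemma split_gain_of_not_regular_wrt:
  fixes \<mu> :: "(nat \<Rightarrow> 'a::finite) \<Rightarrow> real"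
  assumes e: "0 \<le> \<epsilon>" and \<mu>: "\<forall>\<sigma>. 0 \<le> \<mu> \<sigma>" and C: "C \<subseteq> cube n" "mass n \<mu> C > 0"
    and Vs: "distinct Vs" and irregular: "\<not> regular_wrt n (cond n \<mu> C) \<epsilon> Vs"
  shows "\<exists>S. (\<forall>U\<in>set Vs. S U \<subseteq> U)
    \<and> 4 * \<epsilon>^4 / real CARD('a) * real n * mass n \<mu> C \<le> split_gain \<mu> C Vs S"
proof -
  define bad where "bad U \<longleftrightarrow> \<not> regular_on n (cond n \<mu> C) \<epsilon> U" for U
  define m where "m = 4 * \<epsilon>^2 / real CARD('a) * mass n \<mu> C"
  have m: "0 \<le> m" unfolding m_def using C(2) by simp
  have "\<exists>S. bad U \<longrightarrow> S \<subseteq> U \<and> \<epsilon> * real (card U) * m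
      \<le> real (card S) * (\<Sum>\<sigma>\<in>C. \<mu> \<sigma> * sq_dist (emp \<sigma> S) (emp \<sigma> U))" for U
  proof (cases "bad U")
    case True
    then obtain S where "S \<subseteq> U" "\<epsilon> * real (card U) * m
        \<le> real (card S) * (\<Sum>\<sigma>\<in>C. \<mu> \<sigma> * sq_dist (emp \<sigma> S) (emp \<sigma> U))"
      using split_witness_of_not_regular_on[OF e \<mu> C, of U] unfolding bad_def m_def by blast
    then show ?thesis by blast
  qed blast
  from choice[OF allI[OF this]] obtain f where f: "\<forall>U. bad U \<longrightarrow> f U \<subseteq> U \<and> \<epsilon> * real (card U) * m
      \<le> real (card (f U)) * (\<Sum>\<sigma>\<in>C. \<mu> \<sigma> * sq_dist (emp \<sigma> (f U)) (emp \<sigma> U))"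
    by (rule exE)
  define S where "S U = (if bad U then f U else {})" for U
  have "4 * \<epsilon>^4 / real CARD('a) * real n * mass n \<mu> C = \<epsilon> * m * (\<epsilon> * real n)"
    unfolding m_def by (simp add: power2_eq_square power4_eq_xxxx)
  also have "\<dots> \<le> \<epsilon> * m * (\<Sum>U\<in>{U\<in>set Vs. bad U}. real (card U))"
    using not_regular_wrt_le_card[OF Vs irregular] e m unfolding bad_def by (intro mult_left_mono) auto
  also have "\<dots> = (\<Sum>U\<in>{U\<in>set Vs. bad U}. \<epsilon> * real (card U) * m)"
    by (simp add: sum_distrib_left mult_ac)
  also have "\<dots> \<le> split_gain \<mu> C Vs S"
    unfolding split_gain_def
  proof (rule sum_filter_le_sum)
    fix U assume "bad U"
    then show "\<epsilon> * real (card U) * m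
        \<le> real (card (S U)) * (\<Sum>\<sigma>\<in>C. \<mu> \<sigma> * sq_dist (emp \<sigma> (S U)) (emp \<sigma> U))"
      using f unfolding S_def by simp
  qed (use \<mu> in \<open>auto intro!: mult_nonneg_nonneg sum_nonneg simp: sq_dist_nonneg\<close>)
  finally have "4 * \<epsilon>^4 / real CARD('a) * real n * mass n \<mu> C \<le> split_gain \<mu> C Vs S" .
  moreover have "\<forall>U\<in>set Vs. S U \<subseteq> U" using f unfolding S_def by simp
  ultimately show ?thesis by (intro exI[of _ S] conjI)
qed

lemma cond_cube: "is_prob n \<mu> \<Longrightarrow> \<sigma> \<in> cube n \<Longrightarrow> cond n \<mu> (cube n) \<sigma> = \<mu> \<sigma>"
  unfolding cond_def mass_def is_prob_def by simp

lemma regular_wrt_cong: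
  assumes "\<And>\<sigma>. \<sigma> \<in> cube n \<Longrightarrow> \<mu> \<sigma> = \<nu> \<sigma>"
  shows "regular_wrt n \<mu> \<epsilon> Vs = regular_wrt n \<nu> \<epsilon> Vs"
proof -
  have "expect n \<mu> X = expect n \<nu> X" for X
    unfolding expect_def using assms by (intro sum.cong) auto
  then show ?thesis unfolding regular_wrt_def regular_on_def by simp
qed

lemma split_gain_of_not_regular:
  fixes \<mu> :: "(nat \<Rightarrow> 'a::finite) \<Rightarrow> real"
  assumes e: "0 \<le> \<epsilon>" and prob: "is_prob n \<mu>" and Vs: "distinct Vs"
    and irregular: "\<not> regular_wrt n \<mu> \<epsilon> Vs"
  shows "\<exists>S. (\<forall>U\<in>set Vs. S U \<subseteq> U) \<and> 4 * \<epsilon>^4 / real CARD('a) * real n \<le> split_gain \<mu> (cube n) Vs S"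
proof -
  have \<mu>: "\<forall>\<sigma>. 0 \<le> \<mu> \<sigma>" and mass: "mass n \<mu> (cube n) = 1"
    using prob unfolding is_prob_def mass_def by auto
  have "\<not> regular_wrt n (cond n \<mu> (cube n)) \<epsilon> Vs"
    using irregular regular_wrt_cong[of n "cond n \<mu> (cube n)" \<mu>] cond_cube[OF prob] by simp
  from split_gain_of_not_regular_wrt[OF e \<mu> subset_refl _ Vs this] mass show ?thesis by simp
qed

lemma not_homogeneous_irregular_mass:
  fixes \<mu> :: "(nat \<Rightarrow> 'a::finite) \<Rightarrow> real"
  assumes \<mu>: "\<forall>\<sigma>. 0 \<le> \<mu> \<sigma>" and Ss: "distinct Ss" and "\<not> homogeneous n \<mu> \<epsilon> Vs Ss"
    and "\<forall>i<length Ss. \<forall>j<length Vs. \<forall>\<sigma>\<in>Ss!i. \<forall>\<sigma>'\<in>Ss!i. tv (emp \<sigma> (Vs!j)) (emp \<sigma>' (Vs!j)) < \<epsilon>"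
    and "regular_wrt n \<mu> \<epsilon> Vs"
  shows "\<epsilon> \<le> (\<Sum>C\<in>{C\<in>set Ss. mass n \<mu> C > 0 \<and> \<not> regular_wrt n (cond n \<mu> C) \<epsilon> Vs}. mass n \<mu> C)"
proof -
  define good where "good C \<longleftrightarrow> mass n \<mu> C > 0 \<and> regular_wrt n (cond n \<mu> C) \<epsilon> Vs" for C
  define I where "I = {i. i < length Ss \<and> good (Ss!i)}"
  have "I \<subseteq> {..<length Ss}" "\<forall>i\<in>I. mass n \<mu> (Ss!i) > 0"
    "\<forall>i\<in>I. regular_wrt n (cond n \<mu> (Ss!i)) \<epsilon> Vs"
    unfolding I_def good_def by auto
  then have "\<not> (\<Sum>i\<in>{..<length Ss} - I. mass n \<mu> (Ss!i)) < \<epsilon>"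
    using assms(3-5) unfolding homogeneous_def by blast
  moreover have "{..<length Ss} - I = {i. i < length Ss \<and> \<not> good (Ss!i)}"
    unfolding I_def by auto
  ultimately have "\<epsilon> \<le> (\<Sum>i\<in>{i. i < length Ss \<and> \<not> good (Ss!i)}. mass n \<mu> (Ss!i))"
    by simp
  also have "\<dots> = (\<Sum>C\<in>{C\<in>set Ss. \<not> good C}. mass n \<mu> C)"
    by (rule sum_nth_filter[OF Ss])
  also have "\<dots> \<le> (\<Sum>C\<in>set Ss. if mass n \<mu> C > 0 \<and> \<not> regular_wrt n (cond n \<mu> C) \<epsilon> Vs then mass n \<mu> C else 0)"
    by (rule sum_filter_le_sum) (auto simp: good_def mass_nonneg[OF \<mu>])
  also have "\<dots> = (\<Sum>C\<in>{C\<in>set Ss. mass n \<mu> C > 0 \<and> \<not> regular_wrt n (cond n \<mu> C) \<epsilon> Vs}. mass n \<mu> C)"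
    by (rule sum.inter_filter[symmetric]) simp
  finally show ?thesis .
qed

lemma split_gain_of_not_homogeneous:
  fixes \<mu> :: "(nat \<Rightarrow> 'a::finite) \<Rightarrow> real"
  assumes e: "0 \<le> \<epsilon>" and R: "real CARD('a) < \<epsilon> * real R"
    and prob: "is_prob n \<mu>" and Vs: "is_partition {..<n} Vs" and regular: "regular_wrt n \<mu> \<epsilon> Vs"
    and nh: "\<not> homogeneous n \<mu> \<epsilon> Vs (profile_partition R n Vs)"
  shows "\<exists>S. (\<forall>C\<in>set (profile_partition R n Vs). \<forall>U\<in>set Vs. S C U \<subseteq> U)
    \<and> 4 * \<epsilon>^5 / real CARD('a) * real n \<le> (\<Sum>C\<in>set (profile_partition R n Vs). split_gain \<mu> C Vs (S C))"
proof -
  let ?Ss = "profile_partition R n Vs :: (nat \<Rightarrow> 'a) set list"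
  define bad where "bad C \<longleftrightarrow> mass n \<mu> C > 0 \<and> \<not> regular_wrt n (cond n \<mu> C) \<epsilon> Vs" for C
  define g where "g = 4 * \<epsilon>^4 / real CARD('a) * real n"
  have g: "0 \<le> g" unfolding g_def using e by simp
  have \<mu>: "\<forall>\<sigma>. 0 \<le> \<mu> \<sigma>" using prob unfolding is_prob_def by simp
  have sub: "C \<subseteq> cube n" if "C \<in> set ?Ss" for C
    using that is_partition_Union[OF is_partition_profile_partition] by blast
  have "\<forall>i<length ?Ss. \<forall>j<length Vs. \<forall>\<sigma>\<in>?Ss!i. \<forall>\<sigma>'\<in>?Ss!i. tv (emp \<sigma> (Vs!j)) (emp \<sigma>' (Vs!j)) < \<epsilon>"
    using tv_emp_profile_partition[OF R] by (meson nth_mem)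
  then have bad_mass: "\<epsilon> \<le> (\<Sum>C\<in>{C\<in>set ?Ss. bad C}. mass n \<mu> C)"
    unfolding bad_def
    by (rule not_homogeneous_irregular_mass[OF \<mu> is_partition_distinct[OF is_partition_profile_partition] nh
          _ regular])
  have "\<exists>S. C \<in> set ?Ss \<and> bad C \<longrightarrow> (\<forall>U\<in>set Vs. S U \<subseteq> U) \<and> g * mass n \<mu> C \<le> split_gain \<mu> C Vs S"
    for C
  proof (cases "C \<in> set ?Ss \<and> bad C")
    case True
    then show ?thesis
      using split_gain_of_not_regular_wrt[OF e \<mu> sub _ is_partition_distinct[OF Vs]]
      unfolding bad_def g_def by blast
  qed blast
  from choice[OF allI[OF this]] obtain f where f: "\<forall>C. C \<in> set ?Ss \<and> bad C \<longrightarrow>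
      (\<forall>U\<in>set Vs. f C U \<subseteq> U) \<and> g * mass n \<mu> C \<le> split_gain \<mu> C Vs (f C)"
    by (rule exE)
  define S where "S C = (if bad C then f C else (\<lambda>_. {}))" for C
  have "4 * \<epsilon>^5 / real CARD('a) * real n = g * \<epsilon>"
    unfolding g_def by (simp add: power_Suc2[of \<epsilon> 4, simplified])
  also have "\<dots> \<le> g * (\<Sum>C\<in>{C\<in>set ?Ss. bad C}. mass n \<mu> C)"
    by (rule mult_left_mono[OF bad_mass g])
  also have "\<dots> = (\<Sum>C\<in>{C\<in>set ?Ss. bad C}. g * mass n \<mu> C)"
    by (rule sum_distrib_left)
  also have "\<dots> \<le> (\<Sum>C\<in>set ?Ss. split_gain \<mu> C Vs (S C))"
    by (rule sum_filter_le_sum) (use f in \<open>auto simp: S_def split_gain_nonneg[OF \<mu>]\<close>)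
  finally have "4 * \<epsilon>^5 / real CARD('a) * real n \<le> (\<Sum>C\<in>set ?Ss. split_gain \<mu> C Vs (S C))" .
  moreover have "\<forall>C\<in>set ?Ss. \<forall>U\<in>set Vs. S C U \<subseteq> U" using f unfolding S_def by simp
  ultimately show ?thesis by (intro exI[of _ S] conjI)
qed

lemma partition_index_increment:
  fixes \<mu> :: "(nat \<Rightarrow> 'a::finite) \<Rightarrow> real"
  assumes e: "0 \<le> \<epsilon>" and R: "real CARD('a) < \<epsilon> * real R"
    and prob: "is_prob n \<mu>" and Vs: "is_partition {..<n} Vs"
    and nh: "\<not> homogeneous n \<mu> \<epsilon> Vs (profile_partition R n Vs)"
  shows "\<exists>Vs'. is_partition {..<n} Vs' \<and> refines Vs' Vs
    \<and> length Vs' \<le> 2 ^ length Vs * 2 ^ ((Suc R ^ CARD('a)) ^ length Vs * length Vs)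
    \<and> partition_index n \<mu> Vs + 4 * min (\<epsilon>^4) (\<epsilon>^5) / real CARD('a) * real n \<le> partition_index n \<mu> Vs'"
proof -
  let ?c = "4 * min (\<epsilon>^4) (\<epsilon>^5) / real CARD('a) * real n"
  let ?B = "(Suc R ^ CARD('a)) ^ length Vs"
  have \<mu>: "\<forall>\<sigma>. 0 \<le> \<mu> \<sigma>" using prob unfolding is_prob_def by simp
  have c4: "?c \<le> 4 * \<epsilon>^4 / real CARD('a) * real n" and c5: "?c \<le> 4 * \<epsilon>^5 / real CARD('a) * real n"
    by (intro mult_right_mono divide_right_mono; simp)+
  obtain Ss S where Ss: "is_partition (cube n) Ss" "length Ss \<le> ?B"
    and S: "\<forall>C\<in>set Ss. \<forall>U\<in>set Vs. S C U \<subseteq> U"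
    and gain: "?c \<le> (\<Sum>C\<in>set Ss. split_gain \<mu> C Vs (S C))"
  proof (cases "regular_wrt n \<mu> \<epsilon> Vs")
    case True
    from split_gain_of_not_homogeneous[OF e R prob Vs True nh] obtain S
      where "\<forall>C\<in>set (profile_partition R n Vs). \<forall>U\<in>set Vs. S C U \<subseteq> U"
        "4 * \<epsilon>^5 / real CARD('a) * real n \<le> (\<Sum>C\<in>set (profile_partition R n Vs). split_gain \<mu> C Vs (S C))"
      by blast
    with c5 show ?thesis
      by (intro that[OF is_partition_profile_partition length_profile_partition]) auto
  next
    case False
    from split_gain_of_not_regular[OF e prob is_partition_distinct[OF Vs] False] obtain S
      where "\<forall>U\<in>set Vs. S U \<subseteq> U" "4 * \<epsilon>^4 / real CARD('a) * real n \<le> split_gain \<mu> (cube n) Vs S"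
      by blast
    with c4 show ?thesis
      by (intro that[of "[cube n]" "\<lambda>_. S"] is_partition_singleton cube_nonempty) auto
  qed
  from refinement_with_split_gain[OF Vs Ss(1) S \<mu>] obtain Vs' where Vs':
    "is_partition {..<n} Vs'" "refines Vs' Vs"
    "length Vs' \<le> 2 ^ length Vs * 2 ^ (length Ss * length Vs)"
    "partition_index n \<mu> Vs + (\<Sum>C\<in>set Ss. split_gain \<mu> C Vs (S C)) \<le> partition_index n \<mu> Vs'"
    by blast
  have "(2::nat) ^ (length Ss * length Vs) \<le> 2 ^ (?B * length Vs)"
    using Ss(2) by (intro power_increasing mult_le_mono1) auto
  then have "length Vs' \<le> 2 ^ length Vs * 2 ^ (?B * length Vs)"
    using Vs'(3) by (meson le_trans mult_le_mono2)
  with Vs'(1,2,4) gain show ?thesis by (intro exI[of _ Vs'] conjI) auto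
qed

lemma energy_increment:
  fixes \<Phi> :: "'p \<Rightarrow> real" and size :: "'p \<Rightarrow> nat" and g :: "nat \<Rightarrow> nat"
  assumes g: "mono g" "\<And>m. m \<le> g m"
    and bounded: "\<And>P. admissible P \<Longrightarrow> 0 \<le> \<Phi> P \<and> \<Phi> P \<le> M" and T: "M < real T * c"
    and start: "admissible P\<^sub>0" "size P\<^sub>0 \<le> m\<^sub>0"
    and step: "\<And>P. admissible P \<Longrightarrow> \<not> good P \<Longrightarrow>
      \<exists>P'. admissible P' \<and> size P' \<le> g (size P) \<and> \<Phi> P + c \<le> \<Phi> P'"
  shows "\<exists>P. admissible P \<and> good P \<and> size P \<le> (g ^^ T) m\<^sub>0"
proof -
  have "(\<exists>P. admissible P \<and> good P \<and> size P \<le> (g ^^ t) m\<^sub>0)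
      \<or> (\<exists>P. admissible P \<and> size P \<le> (g ^^ t) m\<^sub>0 \<and> real t * c \<le> \<Phi> P)" for t
  proof (induction t)
    case 0
    then show ?case using start bounded by auto
  next
    case (Suc t)
    have grow: "(g ^^ t) m\<^sub>0 \<le> (g ^^ Suc t) m\<^sub>0" using g(2) by simp
    from Suc show ?case
    proof
      assume "\<exists>P. admissible P \<and> good P \<and> size P \<le> (g ^^ t) m\<^sub>0"
      then show ?case using grow by (meson le_trans)
    next
      assume "\<exists>P. admissible P \<and> size P \<le> (g ^^ t) m\<^sub>0 \<and> real t * c \<le> \<Phi> P"
      then obtain P where P: "admissible P" "size P \<le> (g ^^ t) m\<^sub>0" "real t * c \<le> \<Phi> P" by blast
      show ?case
      proof (cases "good P")
        case True
        then show ?thesis using P grow by (meson le_trans)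
      next
        case False
        from step[OF P(1) this] obtain P' where P': "admissible P'" "size P' \<le> g (size P)" "\<Phi> P + c \<le> \<Phi> P'"
          by blast
        have "size P' \<le> (g ^^ Suc t) m\<^sub>0" using P'(2) monoD[OF g(1) P(2)] by simp
        moreover have "real (Suc t) * c \<le> \<Phi> P'" using P(3) P'(3) by (simp add: algebra_simps)
        ultimately show ?thesis using P'(1) by blast
      qed
    qed
  qed
  moreover have "\<not> (admissible P \<and> real T * c \<le> \<Phi> P)" for P
    using bounded[of P] T by linarith
  ultimately show ?thesis by blast
qed

lemma homogeneous_refinement:
  fixes \<mu> :: "(nat \<Rightarrow> 'a::finite) \<Rightarrow> real"
  assumes e: "0 \<le> \<epsilon>" and R: "real CARD('a) < \<epsilon> * real R"
    and T: "real CARD('a) < real T * (4 * min (\<epsilon>^4) (\<epsilon>^5) / real CARD('a))" and n: "0 < n"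
    and prob: "is_prob n \<mu>" and V0: "is_partition {..<n} V0" "length V0 \<le> m\<^sub>0"
  shows "\<exists>Vs. is_partition {..<n} Vs \<and> refines Vs V0
    \<and> length Vs \<le> ((\<lambda>m. 2 ^ m * 2 ^ ((Suc R ^ CARD('a)) ^ m * m)) ^^ T) m\<^sub>0
    \<and> homogeneous n \<mu> \<epsilon> Vs (profile_partition R n Vs)"
proof -
  define g :: "nat \<Rightarrow> nat" where "g m = 2 ^ m * 2 ^ ((Suc R ^ CARD('a)) ^ m * m)" for m
  let ?c = "4 * min (\<epsilon>^4) (\<epsilon>^5) / real CARD('a) * real n"
  have "\<exists>Vs. (is_partition {..<n} Vs \<and> refines Vs V0)
      \<and> homogeneous n \<mu> \<epsilon> Vs (profile_partition R n Vs) \<and> length Vs \<le> (g ^^ T) m\<^sub>0"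
  proof (rule energy_increment[where \<Phi> = "partition_index n \<mu>" and M = "real CARD('a) * real n"])
    show "mono g"
      unfolding g_def by (intro monoI mult_le_mono power_increasing power_mono) auto
    show "m \<le> g m" for m
    proof -
      have "m \<le> 2 ^ m" using less_exp[of m] by simp
      also have "\<dots> \<le> g m" unfolding g_def by simp
      finally show ?thesis .
    qed
    show "real CARD('a) * real n < real T * ?c"
      using mult_strict_right_mono[OF T, of "real n"] n by (simp add: mult_ac)
    show "0 \<le> partition_index n \<mu> Vs \<and> partition_index n \<mu> Vs \<le> real CARD('a) * real n"
      if "is_partition {..<n} Vs \<and> refines Vs V0" for Vs
      using that partition_index_nonneg[OF prob] partition_index_le[OF prob] by blast
    show "is_partition {..<n} V0 \<and> refines V0 V0" using V0(1) refines_refl by blast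
    show "length V0 \<le> m\<^sub>0" by (rule V0(2))
    show "\<exists>Vs'. (is_partition {..<n} Vs' \<and> refines Vs' V0) \<and> length Vs' \<le> g (length Vs)
        \<and> partition_index n \<mu> Vs + ?c \<le> partition_index n \<mu> Vs'"
      if "is_partition {..<n} Vs \<and> refines Vs V0" "\<not> homogeneous n \<mu> \<epsilon> Vs (profile_partition R n Vs)"
      for Vs
      using partition_index_increment[OF e R prob _ that(2)] that(1) refines_trans
      unfolding g_def by blast
  qed
  then show ?thesis unfolding g_def by blast
qed

theorem theorem2p1:
  fixes \<epsilon> :: real
  assumes "\<epsilon> > 0"
  shows "\<exists>N::nat. N > 0 \<and>
    (\<forall>n > N. \<forall>(\<mu> :: (nat \<Rightarrow> 'a::finite) \<Rightarrow> real) V0.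
       is_prob n \<mu> \<and> is_partition {..<n} V0 \<and> real (length V0) \<le> 1 / \<epsilon> \<longrightarrow>
       (\<exists>Vs Ss. is_partition {..<n} Vs \<and> refines Vs V0 \<and> is_partition (cube n) Ss \<and>
          length Vs + length Ss \<le> N \<and> homogeneous n \<mu> \<epsilon> Vs Ss))"
proof -
  obtain R :: nat where R: "real CARD('a) < real R * \<epsilon>"
    using ex_less_of_nat_mult[OF \<open>\<epsilon> > 0\<close>] by blast
  obtain T :: nat where T: "real CARD('a) < real T * (4 * min (\<epsilon>^4) (\<epsilon>^5) / real CARD('a))"
    using ex_less_of_nat_mult[of "4 * min (\<epsilon>^4) (\<epsilon>^5) / real CARD('a)"] \<open>\<epsilon> > 0\<close> by auto
  define L :: nat where "L = ((\<lambda>m. 2 ^ m * 2 ^ ((Suc R ^ CARD('a)) ^ m * m)) ^^ T) (nat \<lfloor>1 / \<epsilon>\<rfloor>)"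
  show ?thesis
  proof (intro exI[of _ "L + (Suc R ^ CARD('a)) ^ L"] conjI allI impI)
    fix n and \<mu> :: "(nat \<Rightarrow> 'a) \<Rightarrow> real" and V0
    assume "L + (Suc R ^ CARD('a)) ^ L < n"
      and "is_prob n \<mu> \<and> is_partition {..<n} V0 \<and> real (length V0) \<le> 1 / \<epsilon>"
    then have "0 < n" "is_prob n \<mu>" "is_partition {..<n} V0" "length V0 \<le> nat \<lfloor>1 / \<epsilon>\<rfloor>"
      by (auto simp: le_nat_floor)
    from homogeneous_refinement[OF _ R[unfolded mult.commute[of _ \<epsilon>]] T this] \<open>\<epsilon> > 0\<close> obtain Vs where
      Vs: "is_partition {..<n} Vs" "refines Vs V0" "length Vs \<le> L"
        "homogeneous n \<mu> \<epsilon> Vs (profile_partition R n Vs)"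
      unfolding L_def by auto
    have "length (profile_partition R n Vs :: (nat \<Rightarrow> 'a) set list) \<le> (Suc R ^ CARD('a)) ^ L"
      using length_profile_partition[of R n Vs, where 'a = 'a]
        power_increasing[OF Vs(3), of "Suc R ^ CARD('a)"] by simp
    with Vs is_partition_profile_partition
    show "\<exists>Vs Ss. is_partition {..<n} Vs \<and> refines Vs V0 \<and> is_partition (cube n) Ss \<and>
        length Vs + length Ss \<le> L + (Suc R ^ CARD('a)) ^ L \<and> homogeneous n \<mu> \<epsilon> Vs Ss"
      by (intro exI[of _ Vs] exI[of _ "profile_partition R n Vs"]) auto
  qed simp
qed

end
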